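(* Let $w=a_1\cdots a_n$ be a word over $\{a,b\}$ with $a_1\neq a_n$. If deleting some $k$ letters from $w$ yields an antipalindrome, then one can obtain an antipalindrome by deleting some $l\le k$ letters from $w$ in such a way that the letters $a_1$ and $a_n$ are not deleted.
   Context: A word is a finite word over the two-letter alphabet $\{a,b\}$. A word $w=a_1\cdots a_n$ is an antipalindrome if $a_i\neq a_{n-i+1}$ for all $i\le n$. *)

theory Defs
  imports Main
begin

datatype letter = A | B

definition antipalindrome :: "letter list \<Rightarrow> bool" where
  "antipalindrome v \<longleftrightarrow> (\<forall>i < length v. v ! i \<noteq> v ! (length v - 1 - i))"

definition delete_positions :: "letter list \<Rightarrow> nat set \<Rightarrow> letter list" where
  "delete_positions w D = nths w ({0..<length w} - D)"

end

theory Submission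
  imports Defs
begin

text \<open>Argue with the set K of kept positions; let x and y be the first and last letter
  of w. If the antipalindrome keeps x but not y, its last letter differs from its first
  letter x, hence equals y, as there are only two letters; so keeping the last position of w
  instead of the last kept position gives the same word. The case where only y is kept is
  symmetric. If neither end is kept, keeping both wraps the antipalindrome into x \<dots> y,
  again an antipalindrome since x \<noteq> y. In no case does the number of kept positions
  decrease.\<close>

lemma letter_eq_if_both_neq: "(a :: letter) \<noteq> c \<Longrightarrow> b \<noteq> c \<Longrightarrow> a = b"
  by (cases a; cases b; cases c) auto

lemma nths_insert_greater:
  assumes "\<forall>i\<in>I. i < m" and "m < length xs"
  shows "nths xs (insert m I) = nths xs I @ [xs ! m]"
  using assms
proof (induction xs arbitrary: I m)
  case Nil
  then show ?case by simp
next
  case (Cons x xs)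
  show ?case
  proof (cases m)
    case 0
    then show ?thesis using Cons.prems by (auto simp: nths_Cons)
  next
    case (Suc m')
    have "{j. Suc j \<in> insert m I} = insert m' {j. Suc j \<in> I}" using Suc by auto
    moreover have "nths xs (insert m' {j. Suc j \<in> I}) = nths xs {j. Suc j \<in> I} @ [xs ! m']"
      by (rule Cons.IH) (use Cons.prems Suc in auto)
    ultimately show ?thesis using Suc Cons.prems by (simp add: nths_Cons)
  qed
qed

lemma nths_insert_less:
  assumes "\<forall>i\<in>I. m < i" and "m < length xs"
  shows "nths xs (insert m I) = xs ! m # nths xs I"
  using assms
proof (induction xs arbitrary: I m)
  case Nil
  then show ?case by simp
next
  case (Cons x xs)
  show ?case
  proof (cases m)
    case 0
    then have "{j. Suc j \<in> insert m I} = {j. Suc j \<in> I}" by auto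
    then show ?thesis using 0 Cons.prems by (auto simp: nths_Cons)
  next
    case (Suc m')
    have "{j. Suc j \<in> insert m I} = insert m' {j. Suc j \<in> I}" using Suc by auto
    moreover have "nths xs (insert m' {j. Suc j \<in> I}) = xs ! m' # nths xs {j. Suc j \<in> I}"
      by (rule Cons.IH) (use Cons.prems Suc in auto)
    ultimately show ?thesis using Suc Cons.prems by (auto simp: nths_Cons)
  qed
qed

lemma nths_eq_snoc_Max:
  assumes "finite K" "K \<noteq> {}" "Max K < length xs"
  shows "nths xs K = nths xs (K - {Max K}) @ [xs ! Max K]"
proof -
  have "insert (Max K) (K - {Max K}) = K" using Max_in assms by blast
  moreover have "\<forall>i\<in>K - {Max K}. i < Max K"
    using Max_ge[OF assms(1)] by (auto simp: less_le)
  ultimately show ?thesis using nths_insert_greater assms(3) by metis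
qed

lemma nths_eq_Cons_Min:
  assumes "finite K" "K \<noteq> {}" "Min K < length xs"
  shows "nths xs K = xs ! Min K # nths xs (K - {Min K})"
proof -
  have "insert (Min K) (K - {Min K}) = K" using Min_in assms by blast
  moreover have "\<forall>i\<in>K - {Min K}. Min K < i"
    using Min_le[OF assms(1)] by (auto simp: less_le)
  ultimately show ?thesis using nths_insert_less assms(3) by metis
qed

lemma nths_replace_Max:
  assumes "finite K" "K \<noteq> {}" "Max K < m" "m < length xs" "xs ! m = xs ! Max K"
  shows "nths xs (insert m (K - {Max K})) = nths xs K"
proof -
  have "\<forall>i\<in>K - {Max K}. i < m" using assms Max_ge le_less_trans by blast
  then have "nths xs (insert m (K - {Max K})) = nths xs (K - {Max K}) @ [xs ! Max K]"
    using assms(4,5) by (simp add: nths_insert_greater)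
  also have "\<dots> = nths xs K"
    using assms(1,2) less_trans[OF assms(3,4)] by (rule nths_eq_snoc_Max[symmetric])
  finally show ?thesis .
qed

lemma nths_replace_Min:
  assumes "finite K" "K \<noteq> {}" "m < Min K" "Min K < length xs" "xs ! m = xs ! Min K"
  shows "nths xs (insert m (K - {Min K})) = nths xs K"
proof -
  have "\<forall>i\<in>K - {Min K}. m < i" using assms Min_le less_le_trans by blast
  then have "nths xs (insert m (K - {Min K})) = xs ! Min K # nths xs (K - {Min K})"
    using less_trans[OF assms(3,4)] assms(5) by (simp add: nths_insert_less)
  also have "\<dots> = nths xs K"
    using assms(1,2,4) by (rule nths_eq_Cons_Min[symmetric])
  finally show ?thesis .
qed

lemma antipalindrome_hd_neq_last:
  assumes "antipalindrome v" "v \<noteq> []"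
  shows "hd v \<noteq> last v"
  using assms unfolding antipalindrome_def by (simp add: hd_conv_nth last_conv_nth)

lemma antipalindrome_Cons_snoc:
  assumes "x \<noteq> y" "antipalindrome v"
  shows "antipalindrome (x # v @ [y])"
  unfolding antipalindrome_def
proof (intro allI impI)
  fix i
  assume i: "i < length (x # v @ [y])"
  show "(x # v @ [y]) ! i \<noteq> (x # v @ [y]) ! (length (x # v @ [y]) - 1 - i)"
  proof (cases "i = 0 \<or> i = Suc (length v)")
    case True
    then show ?thesis using assms(1) by (auto simp: nth_append)
  next
    case False
    then obtain i' where i': "i = Suc i'" "i' < length v"
      using i by (cases i) auto
    have "v ! i' \<noteq> v ! (length v - 1 - i')"
      using assms(2) i'(2) unfolding antipalindrome_def by blast
    moreover have "length (x # v @ [y]) - 1 - i = Suc (length v - 1 - i')" using i' by simp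
    moreover have "length v - 1 - i' < length v" using i' by simp
    ultimately show ?thesis using i' by (simp add: nth_append)
  qed
qed

lemma antipalindrome_nths_shift_to_last:
  assumes K: "K \<subseteq> {0..<length w}" "0 \<in> K" "length w - 1 \<notin> K"
    and ends: "w ! 0 \<noteq> w ! (length w - 1)"
    and anti: "antipalindrome (nths w K)"
  obtains K' where "K' \<subseteq> {0..<length w}" "card K' = card K" "0 \<in> K'" "length w - 1 \<in> K'"
    "nths w K' = nths w K"
proof -
  let ?l = "length w - 1" and ?j = "Max K"
  have fin: "finite K" and ne: "K \<noteq> {}" using K finite_subset by auto
  have "?j \<in> K" using fin ne by (rule Max_in)
  then have j_len: "?j < length w" and "?j \<noteq> ?l" using K by auto
  then have j: "?j < ?l" by linarith
  have "Min K = 0" using Min_le[OF fin K(2)] by simp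
  then have "nths w K = w ! 0 # nths w (K - {0})"
    using nths_eq_Cons_Min[OF fin ne, of w] K(1,2) by auto
  moreover have "nths w K = nths w (K - {?j}) @ [w ! ?j]"
    using fin ne j_len by (rule nths_eq_snoc_Max)
  ultimately have "hd (nths w K) = w ! 0" "last (nths w K) = w ! ?j" "nths w K \<noteq> []"
    by (metis list.sel(1), metis last_snoc, simp)
  then have "w ! ?j \<noteq> w ! 0" using antipalindrome_hd_neq_last[OF anti] by metis
  then have jl: "w ! ?l = w ! ?j" and "?j \<noteq> 0"
    using ends letter_eq_if_both_neq by metis+
  show ?thesis
  proof
    show "insert ?l (K - {?j}) \<subseteq> {0..<length w}" using K by auto
    show "card (insert ?l (K - {?j})) = card K"
      using fin ne K(3) \<open>?j \<in> K\<close> by (simp add: card_Diff_singleton card_gt_0_iff)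
    show "0 \<in> insert ?l (K - {?j})" using K(2) \<open>?j \<noteq> 0\<close> by simp
    show "?l \<in> insert ?l (K - {?j})" by simp
    show "nths w (insert ?l (K - {?j})) = nths w K"
      using fin ne j jl by (intro nths_replace_Max) auto
  qed
qed

lemma antipalindrome_nths_shift_to_first:
  assumes K: "K \<subseteq> {0..<length w}" "0 \<notin> K" "length w - 1 \<in> K"
    and ends: "w ! 0 \<noteq> w ! (length w - 1)"
    and anti: "antipalindrome (nths w K)"
  obtains K' where "K' \<subseteq> {0..<length w}" "card K' = card K" "0 \<in> K'" "length w - 1 \<in> K'"
    "nths w K' = nths w K"
proof -
  let ?l = "length w - 1" and ?j = "Min K"
  have fin: "finite K" and ne: "K \<noteq> {}" using K finite_subset by auto
  have "?j \<in> K" using fin ne by (rule Min_in)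
  then have j_len: "?j < length w" and j: "0 < ?j" using K by (auto intro: Nat.gr0I)
  have l_len: "?l < length w" using K by auto
  have "Max K = ?l" using Max_ge[OF fin K(3)] Max_in[OF fin ne] K(1) by fastforce
  then have "nths w K = nths w (K - {?l}) @ [w ! ?l]"
    using nths_eq_snoc_Max[OF fin ne, of w] l_len by simp
  moreover have "nths w K = w ! ?j # nths w (K - {?j})"
    using fin ne j_len by (rule nths_eq_Cons_Min)
  ultimately have "hd (nths w K) = w ! ?j" "last (nths w K) = w ! ?l" "nths w K \<noteq> []"
    by (metis list.sel(1), metis last_snoc, simp)
  then have "w ! ?j \<noteq> w ! ?l" using antipalindrome_hd_neq_last[OF anti] by metis
  then have j0: "w ! 0 = w ! ?j"
    using ends letter_eq_if_both_neq by metis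
  show ?thesis
  proof
    show "insert 0 (K - {?j}) \<subseteq> {0..<length w}" using K by auto
    show "card (insert 0 (K - {?j})) = card K"
      using fin ne K(2) \<open>?j \<in> K\<close> by (simp add: card_Diff_singleton card_gt_0_iff)
    show "0 \<in> insert 0 (K - {?j})" by simp
    show "?l \<in> insert 0 (K - {?j})" using K(3) \<open>w ! ?j \<noteq> w ! ?l\<close> by auto
    show "nths w (insert 0 (K - {?j})) = nths w K"
      using fin ne j j_len j0 by (rule nths_replace_Min)
  qed
qed

lemma antipalindrome_nths_add_ends:
  assumes K: "K \<subseteq> {0..<length w}" "0 \<notin> K" "length w - 1 \<notin> K"
    and ends: "w ! 0 \<noteq> w ! (length w - 1)"
    and anti: "antipalindrome (nths w K)"
  shows "antipalindrome (nths w (insert 0 (insert (length w - 1) K)))"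
proof -
  let ?l = "length w - 1"
  have "?l \<noteq> 0" using ends by auto
  then have l: "0 < ?l" "?l < length w" by auto
  have "\<forall>i\<in>K. i < ?l"
  proof
    fix i assume "i \<in> K"
    then have "i < length w" "i \<noteq> ?l" using K by auto
    then show "i < ?l" by linarith
  qed
  then have "nths w (insert ?l K) = nths w K @ [w ! ?l]"
    using l(2) by (rule nths_insert_greater)
  moreover have "\<forall>i\<in>insert ?l K. 0 < i" using K(2) l(1) by (auto intro: Nat.gr0I)
  then have "nths w (insert 0 (insert ?l K)) = w ! 0 # nths w (insert ?l K)"
    using l by (intro nths_insert_less) auto
  ultimately have "nths w (insert 0 (insert ?l K)) = w ! 0 # nths w K @ [w ! ?l]"
    by simp
  then show ?thesis using antipalindrome_Cons_snoc[OF ends anti] by simp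
qed

lemma antipalindrome_nths_keeping_ends:
  assumes K: "K \<subseteq> {0..<length w}"
    and ends: "w ! 0 \<noteq> w ! (length w - 1)"
    and anti: "antipalindrome (nths w K)"
  obtains K' where "K' \<subseteq> {0..<length w}" "card K \<le> card K'" "0 \<in> K'" "length w - 1 \<in> K'"
    "antipalindrome (nths w K')"
proof -
  let ?l = "length w - 1"
  have "?l \<noteq> 0" using ends by auto
  consider "0 \<in> K" "?l \<in> K" | "0 \<in> K" "?l \<notin> K" | "0 \<notin> K" "?l \<in> K" | "0 \<notin> K" "?l \<notin> K"
    by blast
  then show ?thesis
  proof cases
    case 1
    with that K anti show ?thesis by blast
  next
    case 2
    with that K ends anti show ?thesis
      by (metis antipalindrome_nths_shift_to_last order.refl)
  next
    case 3
    with that K ends anti show ?thesis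
      by (metis antipalindrome_nths_shift_to_first order.refl)
  next
    case 4
    let ?K' = "insert 0 (insert ?l K)"
    have "finite ?K'" using K finite_subset by auto
    then have "card K \<le> card ?K'" by (rule card_mono) auto
    moreover have "?K' \<subseteq> {0..<length w}" using K \<open>?l \<noteq> 0\<close> by auto
    ultimately show ?thesis
      using antipalindrome_nths_add_ends[OF K 4 ends anti] by (intro that[of ?K']) simp_all
  qed
qed

theorem lemma3:
  fixes w :: "letter list" and D :: "nat set" and k :: nat
  assumes "w \<noteq> []"
    and "hd w \<noteq> last w"
    and "D \<subseteq> {0..<length w}"
    and "card D = k"
    and "antipalindrome (delete_positions w D)"
  shows "\<exists>E l. E \<subseteq> {0..<length w} \<and> card E = l \<and> l \<le> k
           \<and> 0 \<notin> E \<and> length w - 1 \<notin> E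
           \<and> antipalindrome (delete_positions w E)"
proof -
  let ?N = "{0..<length w}"
  have ends: "w ! 0 \<noteq> w ! (length w - 1)"
    using assms(1,2) by (simp add: hd_conv_nth last_conv_nth)
  obtain K' where K': "K' \<subseteq> ?N" "card (?N - D) \<le> card K'" "0 \<in> K'" "length w - 1 \<in> K'"
    "antipalindrome (nths w K')"
    using antipalindrome_nths_keeping_ends[of "?N - D" w] ends assms(5)
    unfolding delete_positions_def by blast
  have "card D \<le> length w" using card_mono[OF _ assms(3)] by simp
  moreover have "finite K'" using K'(1) finite_subset by blast
  ultimately have "card (?N - K') \<le> card D"
    using K'(1,2) assms(3) by (simp add: card_Diff_subset finite_subset)
  moreover have "delete_positions w (?N - K') = nths w K'"
    using K'(1) unfolding delete_positions_def by (simp add: double_diff)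
  ultimately show ?thesis
    using K' assms(1,4) by (intro exI[of _ "?N - K'"] exI[of _ "card (?N - K')"]) auto
qed

end
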